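(* Assume that $\mathcal P$ is proper and let $F\subset\mathcal P$ be closed. Let $\rho:\mathcal P\to[0,\infty]$ be lower semicontinuous with $\rho\ge c$ in $\mathcal P\setminus F$ for some constant $c>0$. Define $$u(x)=\min\Big\{1,\inf_\gamma\int_\gamma\rho\,ds\Big\},\qquad x\in\mathcal P,$$ where the infimum is taken over all rectifiable curves (including constant ones) connecting $x$ to $F$. Then $u$ is lower semicontinuous, $u=0$ on $F$, and $\rho\chi_{\mathcal P\setminus F}$ is an upper gradient of $u$.
   Context: $\mathcal P=(\mathcal P,d,\mu)$ is a metric space (with a positive complete Borel measure $\mu$ with $0<\mu(B)<\infty$ for every ball $B$); proper means all closed balls are compact. Rectifiable curves are parametrized by arc length. A Borel $g:\mathcal P\to[0,\infty]$ is an upper gradient of $u:\mathcal P\to[-\infty,\infty]$ if $|u(\gamma(0))-u(\gamma(l_\gamma))|\le\int_\gamma g\,ds$ for every nonconstant rectifiable curve $\gamma:[0,l_\gamma]\to\mathcal P$. *)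

theory Defs
  imports "HOL-Analysis.Analysis"
begin

definition lower_semicont :: "('a::topological_space \<Rightarrow> 'b::linorder_topology) \<Rightarrow> bool" where
  "lower_semicont f \<longleftrightarrow> (\<forall>t. open {x. t < f x})"

definition proper_space :: "'a::metric_space itself \<Rightarrow> bool" where
  "proper_space _ \<longleftrightarrow> (\<forall>(x::'a) r. compact (cball x r))"

definition curve_length :: "(real \<Rightarrow> 'a::metric_space) \<Rightarrow> real \<Rightarrow> real \<Rightarrow> ennreal" where
  "curve_length \<gamma> a b =
     (SUP (t, n) \<in> {(t, n). t 0 = a \<and> t n = b \<and> (\<forall>i<n. t i \<le> t (Suc i))}.
        ennreal (\<Sum>i<n. dist (\<gamma> (t i)) (\<gamma> (t (Suc i)))))"

text \<open>A rectifiable curve \<gamma> : [0,l] \<rightarrow> P parametrized by arc length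
  (l = 0 gives the constant curves).\<close>
definition arclength_curve :: "(real \<Rightarrow> 'a::metric_space) \<Rightarrow> real \<Rightarrow> bool" where
  "arclength_curve \<gamma> l \<longleftrightarrow> 0 \<le> l \<and> continuous_on {0..l} \<gamma> \<and>
     (\<forall>s t. 0 \<le> s \<longrightarrow> s \<le> t \<longrightarrow> t \<le> l \<longrightarrow> curve_length \<gamma> s t = ennreal (t - s))"

definition line_integral :: "('a::metric_space \<Rightarrow> ennreal) \<Rightarrow> (real \<Rightarrow> 'a) \<Rightarrow> real \<Rightarrow> ennreal" where
  "line_integral g \<gamma> l = (\<integral>\<^sup>+ t \<in> {0..l}. g (\<gamma> t) \<partial>lborel)"

text \<open>Upper gradient (with the usual convention that the integral must be infinite
  whenever one of the endpoint values is infinite).\<close>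
definition upper_gradient :: "('a::metric_space \<Rightarrow> ennreal) \<Rightarrow> ('a \<Rightarrow> ereal) \<Rightarrow> bool" where
  "upper_gradient g u \<longleftrightarrow> g \<in> borel_measurable borel \<and>
     (\<forall>\<gamma> l. arclength_curve \<gamma> l \<and> 0 < l \<longrightarrow>
        (if \<bar>u (\<gamma> 0)\<bar> \<noteq> \<infinity> \<and> \<bar>u (\<gamma> l)\<bar> \<noteq> \<infinity>
         then \<bar>u (\<gamma> 0) - u (\<gamma> l)\<bar> \<le> enn2ereal (line_integral g \<gamma> l)
         else line_integral g \<gamma> l = \<infinity>))"

end

theory Submission
  imports Defs "HOL-Complex_Analysis.Great_Picard"
begin

(* Write d(x) for the infimum of the rho-integrals over curves from x to F, so u = min 1 d.
   Concatenating a curve gamma from x to y with almost optimal curves from y gives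
   d(x) <= int_gamma rho + d(y); if gamma meets F one stops instead at its first hitting time,
   before which rho and rho chi_(P - F) agree. Applied to gamma and to its reversal this makes
   rho chi_(P - F) an upper gradient of u.
   For lower semicontinuity let x_n -> x with d(x_n) < b. Since rho >= c off F, almost optimal
   curves from x_n reach F within length b/c, hence stay in a fixed compact ball of the proper
   space. An Arzela-Ascoli argument yields a 1-Lipschitz limit curve from x to F, and lower
   semicontinuity of rho together with Fatou's lemma bounds its rho-integral by b. The limit
   curve need not be parametrized by arc length; reparametrizing it by arc length does not
   increase the integral, so d(x) <= b. *)

section \<open>Length of curves\<close>

definition polygon_length :: "(real \<Rightarrow> 'a::metric_space) \<Rightarrow> (nat \<Rightarrow> real) \<Rightarrow> nat \<Rightarrow> real" where
  "polygon_length \<gamma> t n = (\<Sum>i<n. dist (\<gamma> (t i)) (\<gamma> (t (Suc i))))"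

definition partitions :: "real \<Rightarrow> real \<Rightarrow> ((nat \<Rightarrow> real) \<times> nat) set" where
  "partitions a b = {(t, n). t 0 = a \<and> t n = b \<and> (\<forall>i<n. t i \<le> t (Suc i))}"

lemma curve_length_altdef:
  "curve_length \<gamma> a b = (SUP (t, n) \<in> partitions a b. ennreal (polygon_length \<gamma> t n))"
  by (simp add: curve_length_def partitions_def polygon_length_def)

lemma polygon_length_nonneg: "0 \<le> polygon_length \<gamma> t n"
  by (simp add: polygon_length_def sum_nonneg)

lemma polygon_length_Suc:
  "polygon_length \<gamma> t (Suc n) = dist (\<gamma> (t 0)) (\<gamma> (t 1)) + polygon_length \<gamma> (t \<circ> Suc) n"
  unfolding polygon_length_def by (subst sum.lessThan_Suc_shift) simp

lemma partitions_0 [simp]: "(t, 0) \<in> partitions a b \<longleftrightarrow> t 0 = a \<and> a = b"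
  by (auto simp: partitions_def)

lemma partitions_Suc:
  "(t, Suc n) \<in> partitions a b \<longleftrightarrow> t 0 = a \<and> t 0 \<le> t 1 \<and> (t \<circ> Suc, n) \<in> partitions (t 1) b"
  by (auto simp: partitions_def less_Suc_eq_0_disj)

lemma partitions_two: "a \<le> b \<Longrightarrow> (case_nat a (\<lambda>_. b), 1) \<in> partitions a b"
  by (auto simp: partitions_def)

lemma partitions_mono:
  assumes "(t, n) \<in> partitions a b" "j \<le> i" "i \<le> n"
  shows "t j \<le> t i"
  using assms(2,3)
proof (induction i)
  case (Suc i)
  show ?case
  proof (cases "j = Suc i")
    case False
    with Suc have "t j \<le> t i" by simp
    also have "t i \<le> t (Suc i)" using assms(1) Suc.prems by (auto simp: partitions_def)
    finally show ?thesis .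
  qed simp
qed simp

lemma partitions_bounds:
  assumes "(t, n) \<in> partitions a b" "i \<le> n"
  shows "t i \<in> {a..b}"
  using partitions_mono[OF assms(1), of 0 i] partitions_mono[OF assms(1), of i n] assms
  by (auto simp: partitions_def)

lemma partitions_imp_le: "(t, n) \<in> partitions a b \<Longrightarrow> a \<le> b"
  using partitions_bounds[of t n a b n] by (auto simp: partitions_def)

lemma polygon_length_le_curve_length:
  "(t, n) \<in> partitions a b \<Longrightarrow> ennreal (polygon_length \<gamma> t n) \<le> curve_length \<gamma> a b"
  unfolding curve_length_altdef by (rule SUP_upper2) auto

lemma dist_le_curve_length:
  "a \<le> b \<Longrightarrow> ennreal (dist (\<gamma> a) (\<gamma> b)) \<le> curve_length \<gamma> a b"
  using polygon_length_le_curve_length[OF partitions_two, of a b \<gamma>]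
  by (simp add: polygon_length_def)

lemma dist_plus_curve_length_le:
  assumes "a \<le> b" "b \<le> c"
  shows "ennreal (dist (\<gamma> a) (\<gamma> b)) + curve_length \<gamma> b c \<le> curve_length \<gamma> a c"
proof -
  have "partitions b c \<noteq> {}" using partitions_two[OF assms(2)] by blast
  then have "ennreal (dist (\<gamma> a) (\<gamma> b)) + curve_length \<gamma> b c
      = (SUP (t, n) \<in> partitions b c. ennreal (dist (\<gamma> a) (\<gamma> b)) + ennreal (polygon_length \<gamma> t n))"
    unfolding curve_length_altdef by (subst ennreal_SUP_add_right) (auto simp: case_prod_unfold)
  also have "\<dots> \<le> curve_length \<gamma> a c"
  proof (rule SUP_least, clarify)
    fix t n assume tn: "(t, n) \<in> partitions b c"
    moreover have "case_nat a t \<circ> Suc = t" by (simp add: fun_eq_iff)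
    ultimately have "(case_nat a t, Suc n) \<in> partitions a c"
      using assms(1) unfolding partitions_Suc by (simp add: partitions_def)
    moreover have "polygon_length \<gamma> (case_nat a t) (Suc n) = dist (\<gamma> a) (\<gamma> b) + polygon_length \<gamma> t n"
      using tn by (simp add: polygon_length_Suc partitions_def o_def)
    ultimately show "ennreal (dist (\<gamma> a) (\<gamma> b)) + ennreal (polygon_length \<gamma> t n) \<le> curve_length \<gamma> a c"
      using polygon_length_le_curve_length[of "case_nat a t" "Suc n" a c \<gamma>]
      by (simp add: polygon_length_nonneg flip: ennreal_plus)
  qed
  finally show ?thesis .
qed

lemma polygon_length_plus_curve_length_le:
  "(t, n) \<in> partitions a b \<Longrightarrow> b \<le> c \<Longrightarrow>
     ennreal (polygon_length \<gamma> t n) + curve_length \<gamma> b c \<le> curve_length \<gamma> a c"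
proof (induction n arbitrary: t a)
  case (Suc n)
  then have tl: "(t \<circ> Suc, n) \<in> partitions (t 1) b" and a: "t 0 = a" "a \<le> t 1"
    by (auto simp: partitions_Suc)
  have "ennreal (polygon_length \<gamma> t (Suc n)) + curve_length \<gamma> b c
      = ennreal (dist (\<gamma> a) (\<gamma> (t 1))) + (ennreal (polygon_length \<gamma> (t \<circ> Suc) n) + curve_length \<gamma> b c)"
    by (simp add: polygon_length_Suc a polygon_length_nonneg add.assoc flip: ennreal_plus)
  also have "\<dots> \<le> ennreal (dist (\<gamma> a) (\<gamma> (t 1))) + curve_length \<gamma> (t 1) c"
    using Suc.IH[OF tl Suc.prems(2)] by (rule add_left_mono)
  also have "\<dots> \<le> curve_length \<gamma> a c"
    using dist_plus_curve_length_le[OF a(2) order_trans[OF partitions_imp_le[OF tl] Suc.prems(2)]] .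
  finally show ?case .
qed (simp add: polygon_length_def)

lemma curve_length_superadditive:
  assumes "a \<le> b" "b \<le> c"
  shows "curve_length \<gamma> a b + curve_length \<gamma> b c \<le> curve_length \<gamma> a c"
proof -
  have "partitions a b \<noteq> {}" using partitions_two[OF assms(1)] by blast
  then have "curve_length \<gamma> a b + curve_length \<gamma> b c
     = (SUP (t, n) \<in> partitions a b. ennreal (polygon_length \<gamma> t n) + curve_length \<gamma> b c)"
    unfolding curve_length_altdef[of \<gamma> a b]
    by (subst ennreal_SUP_add_left[symmetric]) (auto simp: case_prod_unfold)
  also have "\<dots> \<le> curve_length \<gamma> a c"
    by (rule SUP_least, clarify, rule polygon_length_plus_curve_length_le[OF _ assms(2)])
  finally show ?thesis .
qed

lemma polygon_length_le_curve_length_split: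
  "(t, n) \<in> partitions a c \<Longrightarrow> a \<le> b \<Longrightarrow> b \<le> c \<Longrightarrow>
     ennreal (polygon_length \<gamma> t n) \<le> curve_length \<gamma> a b + curve_length \<gamma> b c"
proof (induction n arbitrary: t a)
  case (Suc n)
  then have tl: "(t \<circ> Suc, n) \<in> partitions (t 1) c" and a: "t 0 = a" "a \<le> t 1"
    by (auto simp: partitions_Suc)
  have split: "ennreal (polygon_length \<gamma> t (Suc n))
      = ennreal (dist (\<gamma> a) (\<gamma> (t 1))) + ennreal (polygon_length \<gamma> (t \<circ> Suc) n)"
    by (simp add: polygon_length_Suc a polygon_length_nonneg flip: ennreal_plus)
  show ?case
  proof (cases "t 1 \<le> b")
    case True
    have "ennreal (polygon_length \<gamma> t (Suc n))
        \<le> ennreal (dist (\<gamma> a) (\<gamma> (t 1))) + (curve_length \<gamma> (t 1) b + curve_length \<gamma> b c)"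
      unfolding split using Suc.IH[OF tl True Suc.prems(3)] by (rule add_left_mono)
    also have "\<dots> = (ennreal (dist (\<gamma> a) (\<gamma> (t 1))) + curve_length \<gamma> (t 1) b) + curve_length \<gamma> b c"
      by (simp add: add.assoc)
    also have "\<dots> \<le> curve_length \<gamma> a b + curve_length \<gamma> b c"
      by (rule add_right_mono[OF dist_plus_curve_length_le[OF a(2) True]])
    finally show ?thesis .
  next
    case False
    (* b lies inside the first segment; refine the partition there *)
    have p: "(case_nat b (t \<circ> Suc), Suc n) \<in> partitions b c"
      using tl False by (auto simp: partitions_Suc o_def)
    have "polygon_length \<gamma> t (Suc n)
        \<le> dist (\<gamma> a) (\<gamma> b) + polygon_length \<gamma> (case_nat b (t \<circ> Suc)) (Suc n)"
      using dist_triangle[of "\<gamma> a" "\<gamma> (t 1)" "\<gamma> b"] a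
      by (simp add: polygon_length_Suc o_def)
    then have "ennreal (polygon_length \<gamma> t (Suc n))
        \<le> ennreal (dist (\<gamma> a) (\<gamma> b)) + ennreal (polygon_length \<gamma> (case_nat b (t \<circ> Suc)) (Suc n))"
      by (simp add: polygon_length_nonneg ennreal_leI flip: ennreal_plus)
    also have "\<dots> \<le> curve_length \<gamma> a b + curve_length \<gamma> b c"
      by (rule add_mono[OF dist_le_curve_length[OF Suc.prems(2)] polygon_length_le_curve_length[OF p]])
    finally show ?thesis .
  qed
qed (simp add: polygon_length_def)

lemma curve_length_add:
  assumes "a \<le> b" "b \<le> c"
  shows "curve_length \<gamma> a c = curve_length \<gamma> a b + curve_length \<gamma> b c"
proof (rule antisym)
  show "curve_length \<gamma> a c \<le> curve_length \<gamma> a b + curve_length \<gamma> b c"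
    unfolding curve_length_altdef[of \<gamma> a c]
    by (rule SUP_least, clarify, rule polygon_length_le_curve_length_split[OF _ assms])
qed (rule curve_length_superadditive[OF assms])

lemma curve_length_le_lipschitz:
  assumes "L-lipschitz_on {a..b} \<gamma>"
  shows "curve_length \<gamma> a b \<le> ennreal (L * (b - a))"
  unfolding curve_length_altdef
proof (rule SUP_least, clarify)
  fix t n assume tn: "(t, n) \<in> partitions a b"
  have "polygon_length \<gamma> t n \<le> (\<Sum>i<n. L * (t (Suc i) - t i))"
    unfolding polygon_length_def
  proof (rule sum_mono)
    fix i assume "i \<in> {..<n}"
    then have "t i \<le> t (Suc i)" "t i \<in> {a..b}" "t (Suc i) \<in> {a..b}"
      using tn partitions_bounds[OF tn] by (auto simp: partitions_def)
    moreover from \<open>t i \<le> t (Suc i)\<close> have "dist (t i) (t (Suc i)) = t (Suc i) - t i"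
      by (simp add: dist_real_def)
    ultimately show "dist (\<gamma> (t i)) (\<gamma> (t (Suc i))) \<le> L * (t (Suc i) - t i)"
      using lipschitz_onD[OF assms, of "t i" "t (Suc i)"] by simp
  qed
  also have "\<dots> = L * (b - a)"
    using tn by (simp add: sum_distrib_left[symmetric] sum_lessThan_telescope partitions_def)
  finally show "ennreal (polygon_length \<gamma> t n) \<le> ennreal (L * (b - a))" by (rule ennreal_leI)
qed

lemma curve_length_le_reparametrization:
  assumes "mono_on {a..b} \<phi>" "\<phi> a = c" "\<phi> b = d"
    and "\<And>t. t \<in> {a..b} \<Longrightarrow> \<gamma>' (\<phi> t) = \<gamma> t"
  shows "curve_length \<gamma> a b \<le> curve_length \<gamma>' c d"
  unfolding curve_length_altdef[of \<gamma>]
proof (rule SUP_least, clarify)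
  fix t n assume tn: "(t, n) \<in> partitions a b"
  have "(\<phi> \<circ> t, n) \<in> partitions c d"
    using tn assms(1-3) partitions_bounds[OF tn]
    by (auto simp: partitions_def intro!: mono_onD[OF assms(1)])
  moreover have "polygon_length \<gamma> t n = polygon_length \<gamma>' (\<phi> \<circ> t) n"
    unfolding polygon_length_def
    by (rule sum.cong) (use partitions_bounds[OF tn] assms(4) in auto)
  ultimately show "ennreal (polygon_length \<gamma> t n) \<le> curve_length \<gamma>' c d"
    using polygon_length_le_curve_length by metis
qed

lemma arclength_curve_lipschitz:
  assumes "arclength_curve \<gamma> l"
  shows "1-lipschitz_on {0..l} \<gamma>"
proof (rule lipschitz_on_leI)
  fix s t assume "s \<in> {0..l}" "t \<in> {0..l}" "s \<le> t"
  then have "ennreal (dist (\<gamma> s) (\<gamma> t)) \<le> ennreal (t - s)"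
    using dist_le_curve_length[of s t \<gamma>] assms by (simp add: arclength_curve_def)
  then show "dist (\<gamma> s) (\<gamma> t) \<le> 1 * dist s t"
    using \<open>s \<le> t\<close> by (auto simp: dist_real_def ennreal_le_iff2)
qed simp

lemma arclength_curve_const: "arclength_curve (\<lambda>_. x) 0"
proof -
  have "curve_length (\<lambda>_. x) 0 0 = 0"
    using curve_length_le_lipschitz[of 0 0 0 "\<lambda>_. x"] by (simp add: lipschitz_on_def)
  then show ?thesis
    unfolding arclength_curve_def
  proof (intro conjI allI impI)
    fix s t :: real assume "0 \<le> s" "s \<le> t" "t \<le> 0"
    then have "s = 0" "t = 0" by linarith+
    with \<open>curve_length (\<lambda>_. x) 0 0 = 0\<close> show "curve_length (\<lambda>_. x) s t = ennreal (t - s)"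
      by simp
  qed simp_all
qed

section \<open>Lipschitz maps of the real line and Lebesgue measure\<close>

lemma lipschitz_image_interval_measure_le:
  fixes f :: "real \<Rightarrow> real"
  assumes "L-lipschitz_on {u..v} f"
  shows "f ` {u..v} \<in> lmeasurable" "measure lebesgue (f ` {u..v}) \<le> L * measure lebesgue {u..v}"
proof -
  have "f ` {u..v} \<in> lmeasurable \<and> measure lebesgue (f ` {u..v}) \<le> L * measure lebesgue {u..v}"
  proof (cases "u \<le> v")
    case True
    obtain c d where cd: "f ` {u..v} = {c..d}" "c \<le> d"
      using continuous_image_closed_interval[OF True lipschitz_on_continuous_on[OF assms]] by blast
    then obtain x y where "x \<in> {u..v}" "y \<in> {u..v}" "f x = c" "f y = d"
      by (metis atLeastAtMost_iff imageE order_refl)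
    moreover from \<open>x \<in> {u..v}\<close> \<open>y \<in> {u..v}\<close> have "dist y x \<le> v - u"
      by (auto simp: dist_real_def)
    ultimately have "d - c \<le> L * (v - u)"
      using lipschitz_onD[OF assms, of y x] mult_left_mono[of "dist y x" "v - u" L]
        lipschitz_on_nonneg[OF assms]
      by (auto simp: dist_real_def abs_le_iff)
    with cd True show ?thesis by simp
  qed (use lipschitz_on_nonneg[OF assms] in simp)
  then show "f ` {u..v} \<in> lmeasurable" "measure lebesgue (f ` {u..v}) \<le> L * measure lebesgue {u..v}"
    by simp_all
qed

lemma sum_measure_nonoverlapping_cboxes_le:
  fixes T :: "'a::euclidean_space set"
  assumes "finite \<D>" "\<And>K. K \<in> \<D> \<Longrightarrow> interior K \<noteq> {} \<and> (\<exists>a b. K = cbox a b)"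
    and "pairwise (\<lambda>A B. interior A \<inter> interior B = {}) \<D>"
    and "\<Union>\<D> \<subseteq> T" "T \<in> lmeasurable"
  shows "(\<Sum>K\<in>\<D>. measure lebesgue K) \<le> measure lebesgue T"
proof -
  have div: "\<D> division_of \<Union>\<D>"
  proof (rule division_ofI[OF assms(1) _ _ _ _ refl])
    show "K \<noteq> {}" "\<exists>a b. K = cbox a b" if "K \<in> \<D>" for K
      using assms(2)[OF that] by auto
    show "interior K1 \<inter> interior K2 = {}" if "K1 \<in> \<D>" "K2 \<in> \<D>" "K1 \<noteq> K2" for K1 K2
      using assms(3) that by (auto simp: pairwise_def)
  qed auto
  have "(\<Sum>K\<in>\<D>. measure lebesgue K) = measure lebesgue (\<Union>\<D>)"
    by (rule content_division[OF div])
  also have "\<dots> \<le> measure lebesgue T"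
    using div assms(4,5) by (intro measure_mono_fmeasurable) (auto dest: lmeasurable_division)
  finally show ?thesis .
qed

lemma bounded_subset_open_nonoverlapping_cover:
  fixes S :: "real set"
  assumes S: "bounded S" "S \<subseteq> T" and T: "open T"
  obtains \<D> where "countable \<D>" "\<And>K. K \<in> \<D> \<Longrightarrow> K \<subseteq> T \<and> interior K \<noteq> {} \<and> (\<exists>c d. K = cbox c d)"
    "pairwise (\<lambda>A B. interior A \<inter> interior B = {}) \<D>" "S \<subseteq> \<Union>\<D>"
proof -
  have "\<forall>x. \<exists>r>0. x \<in> S \<longrightarrow> ball x r \<subseteq> T"
    using T S(2) by (meson openE subsetD zero_less_one)
  then obtain R where R: "\<And>x. 0 < R x" "\<And>x. x \<in> S \<Longrightarrow> ball x (R x) \<subseteq> T"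
    by metis
  have gauge: "gauge (\<lambda>x. ball x (R x))"
    using R(1) by (simp add: gauge_def)
  obtain B where B: "\<And>x. x \<in> S \<Longrightarrow> \<bar>x\<bar> \<le> B" using S(1) bounded_iff by force
  have "\<bar>x\<bar> \<le> \<bar>B\<bar>" if "x \<in> S" for x
    using B[OF that] by linarith
  then have box: "S \<subseteq> cbox (-(\<bar>B\<bar> + 1)) (\<bar>B\<bar> + 1)" "box (-(\<bar>B\<bar> + 1)) (\<bar>B\<bar> + 1) \<noteq> {}"
    by (force simp: abs_le_iff)+
  obtain \<D> where "countable \<D>"
    and cbox: "\<And>K. K \<in> \<D> \<Longrightarrow> interior K \<noteq> {} \<and> (\<exists>c d. K = cbox c d)"
    and nonoverlapping: "pairwise (\<lambda>A B. interior A \<inter> interior B = {}) \<D>"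
    and inside: "\<And>K. K \<in> \<D> \<Longrightarrow> \<exists>x \<in> S \<inter> K. K \<subseteq> ball x (R x)"
    and cover: "S \<subseteq> \<Union>\<D>"
    using covering_lemma[OF box gauge] by force
  have "K \<subseteq> T" if "K \<in> \<D>" for K
    using inside[OF that] R(2) by blast
  with cbox show ?thesis
    by (intro that[OF \<open>countable \<D>\<close> _ nonoverlapping cover]) blast
qed

lemma lipschitz_image_measure_le_open:
  fixes f :: "real \<Rightarrow> real"
  assumes f: "L-lipschitz_on UNIV f" and S: "bounded S" "S \<subseteq> T" and fS: "f ` S \<in> sets lebesgue"
    and T: "open T" and Tm: "T \<in> lmeasurable"
  shows "measure lebesgue (f ` S) \<le> L * measure lebesgue T"
proof -
  have L: "0 \<le> L" using lipschitz_on_nonneg[OF f] .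
  obtain \<D> where "countable \<D>"
    and cbox: "\<And>K. K \<in> \<D> \<Longrightarrow> K \<subseteq> T \<and> interior K \<noteq> {} \<and> (\<exists>c d. K = cbox c d)"
    and nonoverlapping: "pairwise (\<lambda>A B. interior A \<inter> interior B = {}) \<D>"
    and cover: "S \<subseteq> \<Union>\<D>"
    using bounded_subset_open_nonoverlapping_cover[OF S T] by blast
  have image_K: "f ` K \<in> lmeasurable" "measure lebesgue (f ` K) \<le> L * measure lebesgue K"
    if K: "K \<in> \<D>" for K
  proof -
    obtain c d where "K = {c..d}" using cbox[OF K] by auto
    then show "f ` K \<in> lmeasurable" "measure lebesgue (f ` K) \<le> L * measure lebesgue K"
      using lipschitz_image_interval_measure_le[OF lipschitz_on_subset[OF f subset_UNIV]] by simp_all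
  qed
  have bound: "measure lebesgue (\<Union>K\<in>\<D>'. f ` K) \<le> L * measure lebesgue T"
    if "\<D>' \<subseteq> \<D>" "finite \<D>'" for \<D>'
  proof -
    have "measure lebesgue (\<Union>K\<in>\<D>'. f ` K) \<le> (\<Sum>K\<in>\<D>'. measure lebesgue (f ` K))"
      using that image_K by (intro measure_UNION_le) auto
    also have "\<dots> \<le> L * (\<Sum>K\<in>\<D>'. measure lebesgue K)"
      unfolding sum_distrib_left using that image_K(2) by (intro sum_mono) blast
    also have "\<dots> \<le> L * measure lebesgue T"
    proof (rule mult_left_mono[OF sum_measure_nonoverlapping_cboxes_le[OF \<open>finite \<D>'\<close>] L])
      show "\<And>K. K \<in> \<D>' \<Longrightarrow> interior K \<noteq> {} \<and> (\<exists>a b. K = cbox a b)"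
        using cbox that(1) by blast
      show "pairwise (\<lambda>A B. interior A \<inter> interior B = {}) \<D>'"
        using pairwise_subset[OF nonoverlapping that(1)] .
      show "\<Union>\<D>' \<subseteq> T" using cbox that(1) by blast
    qed (rule Tm)
    finally show ?thesis .
  qed
  have UN: "(\<Union>K\<in>\<D>. f ` K) \<in> fmeasurable lebesgue"
    "measure lebesgue (\<Union>K\<in>\<D>. f ` K) \<le> L * measure lebesgue T"
    using fmeasurable_UN_bound[OF \<open>countable \<D>\<close> image_K(1) bound]
      measure_UN_bound[OF \<open>countable \<D>\<close> image_K(1) bound] by blast+
  have "f ` S \<subseteq> (\<Union>K\<in>\<D>. f ` K)" using cover by blast
  then have "measure lebesgue (f ` S) \<le> measure lebesgue (\<Union>K\<in>\<D>. f ` K)"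
    using fS UN(1) by (rule measure_mono_fmeasurable)
  also have "\<dots> \<le> L * measure lebesgue T"
    by (rule UN(2))
  finally show ?thesis .
qed

lemma lipschitz_image_measure_le:
  fixes f :: "real \<Rightarrow> real"
  assumes f: "L-lipschitz_on UNIV f"
    and S: "S \<in> sets lebesgue" "bounded S" and fS: "f ` S \<in> sets lebesgue"
  shows "measure lebesgue (f ` S) \<le> L * measure lebesgue S"
proof (rule field_le_epsilon)
  fix e :: real assume "e > 0"
  have L: "0 \<le> L" using lipschitz_on_nonneg[OF f] .
  define e' where "e' = e / (L + 1)"
  have "0 < L + 1" using L by simp
  then have e': "e' > 0" "L * e' \<le> e"
    using \<open>e > 0\<close> L mult_right_mono[of L "L + 1" e]
    by (simp_all add: e'_def pos_divide_le_eq)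
  obtain T where T: "open T" "S \<subseteq> T" "T - S \<in> lmeasurable" "emeasure lebesgue (T - S) < ennreal e'"
    using sets_lebesgue_outer_open[OF S(1) \<open>e' > 0\<close>] by blast
  have Sm: "S \<in> lmeasurable" using S by (simp add: bounded_set_imp_lmeasurable)
  then have Tm: "T \<in> lmeasurable" using fmeasurable_Diff_D[OF T(3) _ T(2)] by simp
  have "measure lebesgue (T - S) = measure lebesgue T - measure lebesgue S"
    using Tm S(1) T(2) by (intro measure_Diff) (auto simp: fmeasurable_def)
  moreover have "measure lebesgue (T - S) < e'"
    using T(3,4) e' by (simp add: emeasure_eq_measure2 ennreal_less_iff)
  ultimately have T_le: "L * measure lebesgue T \<le> L * measure lebesgue S + e"
    using L e' mult_left_mono[of "measure lebesgue (T - S)" e' L] by (simp add: right_diff_distrib)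
  have "measure lebesgue (f ` S) \<le> L * measure lebesgue T"
    by (rule lipschitz_image_measure_le_open[OF f S(2) T(2) fS T(1) Tm])
  with T_le show "measure lebesgue (f ` S) \<le> L * measure lebesgue S + e"
    by linarith
qed

lemma emeasure_le_vimage_mono_lipschitz:
  fixes s :: "real \<Rightarrow> real"
  assumes s: "1-lipschitz_on UNIV s" "mono s" and "a \<le> b" and A: "A \<in> sets borel"
  shows "emeasure lborel (A \<inter> {s a..s b}) \<le> emeasure lborel (s -` A \<inter> {a..b})"
proof -
  have cont: "continuous_on UNIV s" using lipschitz_on_continuous_on[OF s(1)] .
  define B where "B = s -` A \<inter> {a..b}"
  have "s \<in> borel_measurable borel" using cont by (rule borel_measurable_continuous_onI)
  then have B: "B \<in> sets borel"
    unfolding B_def using A by (intro sets.Int measurable_sets_borel) auto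
  have image: "s ` B = A \<inter> {s a..s b}"
  proof
    show "s ` B \<subseteq> A \<inter> {s a..s b}" using s(2) by (auto simp: B_def mono_def)
    show "A \<inter> {s a..s b} \<subseteq> s ` B"
    proof
      fix y assume y: "y \<in> A \<inter> {s a..s b}"
      then obtain t where "a \<le> t" "t \<le> b" "s t = y"
        using IVT'[of s a y b] \<open>a \<le> b\<close> continuous_on_subset[OF cont] by auto
      then show "y \<in> s ` B" using y by (auto simp: B_def)
    qed
  qed
  have "measure lebesgue (s ` B) \<le> 1 * measure lebesgue B"
    using B A image by (intro lipschitz_image_measure_le[OF s(1)]) (auto simp: B_def bounded_Int)
  moreover have "B \<in> lmeasurable" "A \<inter> {s a..s b} \<in> lmeasurable"
    using A B by (auto intro!: bounded_set_imp_lmeasurable simp: B_def bounded_Int)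
  ultimately have "emeasure lebesgue (A \<inter> {s a..s b}) \<le> emeasure lebesgue B"
    using image by (simp add: emeasure_eq_measure2 ennreal_leI)
  then show ?thesis
    using A B by (simp add: B_def)
qed

lemma nn_integral_le_compose_mono_lipschitz:
  fixes s :: "real \<Rightarrow> real" and f :: "real \<Rightarrow> ennreal"
  assumes s: "1-lipschitz_on UNIV s" "mono s" and "a \<le> b" and f: "f \<in> borel_measurable borel"
  shows "(\<integral>\<^sup>+\<sigma>\<in>{s a..s b}. f \<sigma> \<partial>lborel) \<le> (\<integral>\<^sup>+t\<in>{a..b}. f (s t) \<partial>lborel)"
proof -
  have s_meas: "s \<in> borel_measurable borel"
    using lipschitz_on_continuous_on[OF s(1)] by (rule borel_measurable_continuous_onI)
  define M where "M = density lborel (indicator {s a..s b})"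
  define N where "N = distr (density lborel (indicator {a..b})) borel s"
  have M: "emeasure M A = emeasure lborel (A \<inter> {s a..s b})" if "A \<in> sets borel" for A
  proof -
    have "emeasure M A = (\<integral>\<^sup>+x\<in>A. indicator {s a..s b} x \<partial>lborel)"
      using that by (simp add: M_def emeasure_density)
    also have "\<dots> = (\<integral>\<^sup>+x. indicator (A \<inter> {s a..s b}) x \<partial>lborel)"
      by (intro nn_integral_cong) (simp split: split_indicator)
    finally show ?thesis using that by simp
  qed
  have N: "emeasure N A = emeasure lborel (s -` A \<inter> {a..b})" if "A \<in> sets borel" for A
  proof -
    have A': "s -` A \<in> sets borel" using that s_meas by (auto intro: measurable_sets_borel)
    have "emeasure N A = (\<integral>\<^sup>+x\<in>s -` A. indicator {a..b} x \<partial>lborel)"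
      unfolding N_def using that s_meas A' by (simp add: emeasure_distr emeasure_density)
    also have "\<dots> = (\<integral>\<^sup>+x. indicator (s -` A \<inter> {a..b}) x \<partial>lborel)"
      by (intro nn_integral_cong) (simp split: split_indicator)
    finally show ?thesis using A' by simp
  qed
  have "M \<le> N"
    using M N emeasure_le_vimage_mono_lipschitz[OF s \<open>a \<le> b\<close>]
    by (subst le_measure) (auto simp: M_def N_def)
  then have "integral\<^sup>N M f \<le> integral\<^sup>N N f"
    by (rule nn_integral_mono_measure[rotated]) (simp add: M_def N_def)
  then show ?thesis
    using f s_meas
    by (simp add: M_def N_def nn_integral_density nn_integral_distr mult.commute)
qed

section \<open>Reparametrization by arc length\<close>

lemma lipschitz_on_clamp:
  fixes f :: "real \<Rightarrow> 'a::metric_space"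
  assumes "L-lipschitz_on {a..b} f"
  shows "L-lipschitz_on UNIV (\<lambda>t. f (max a (min b t)))"
proof (cases "a \<le> b")
  case True
  have "1-lipschitz_on UNIV (\<lambda>t::real. max a (min b t))"
    by (rule lipschitz_onI) (auto simp: dist_real_def)
  moreover have "(\<lambda>t. max a (min b t)) ` UNIV = {a..b}"
  proof (intro equalityI subsetI)
    fix x assume "x \<in> {a..b}"
    then show "x \<in> range (\<lambda>t. max a (min b t))" by (intro image_eqI[of x _ x]) auto
  qed (use True in auto)
  ultimately show ?thesis
    using lipschitz_on_compose2[of 1 UNIV "\<lambda>t. max a (min b t)" L f] assms by simp
next
  case False
  then show ?thesis
    using lipschitz_on_nonneg[OF assms] by (auto intro!: lipschitz_onI)
qed

lemma arclength_curveI: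
  assumes "1-lipschitz_on {0..l} \<gamma>" "0 \<le> l"
    and "\<And>s t. 0 \<le> s \<Longrightarrow> s \<le> t \<Longrightarrow> t \<le> l \<Longrightarrow> ennreal (t - s) \<le> curve_length \<gamma> s t"
  shows "arclength_curve \<gamma> l"
  unfolding arclength_curve_def
proof (intro conjI allI impI)
  fix s t assume st: "0 \<le> s" "s \<le> t" "t \<le> l"
  have "curve_length \<gamma> s t \<le> ennreal (1 * (t - s))"
    using st by (intro curve_length_le_lipschitz lipschitz_on_subset[OF assms(1)]) auto
  with assms(3)[OF st] show "curve_length \<gamma> s t = ennreal (t - s)" by simp
qed (use assms lipschitz_on_continuous_on in auto)

lemma lipschitz_curve_length_function:
  fixes \<eta> :: "real \<Rightarrow> 'a::metric_space"
  assumes \<eta>: "1-lipschitz_on {a..b} \<eta>" and "a \<le> b"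
  obtains s where "1-lipschitz_on UNIV s" "mono s" "s a = 0"
    "\<And>x y. x \<in> {a..b} \<Longrightarrow> y \<in> {a..b} \<Longrightarrow> x \<le> y \<Longrightarrow> curve_length \<eta> x y = ennreal (s y - s x)"
proof -
  define D where "D x y = enn2real (curve_length \<eta> x y)" for x y
  have D: "curve_length \<eta> x y = ennreal (D x y)" "D x y \<le> y - x"
    if "a \<le> x" "x \<le> y" "y \<le> b" for x y
  proof -
    have "curve_length \<eta> x y \<le> ennreal (1 * (y - x))"
      using that by (intro curve_length_le_lipschitz lipschitz_on_subset[OF \<eta>]) auto
    then show "curve_length \<eta> x y = ennreal (D x y)" "D x y \<le> y - x"
      using that by (auto simp: D_def enn2real_leI ennreal_enn2real_if top_unique)
  qed
  define cl where "cl t = max a (min b t)" for t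
  define s where "s t = D a (cl t)" for t
  have cl: "a \<le> cl t" "cl t \<le> b" "x \<le> y \<Longrightarrow> cl x \<le> cl y" "x \<le> y \<Longrightarrow> cl y - cl x \<le> y - x"
    "t \<in> {a..b} \<Longrightarrow> cl t = t" for t x y
    using \<open>a \<le> b\<close> by (auto simp: cl_def)
  have D_nonneg: "0 \<le> D x y" for x y by (simp add: D_def)
  have s_diff: "s y - s x = D (cl x) (cl y)" if "x \<le> y" for x y
  proof -
    have "ennreal (D a (cl y)) = ennreal (D a (cl x) + D (cl x) (cl y))"
      using curve_length_add[of a "cl x" "cl y" \<eta>] D[of a "cl x"] D[of a "cl y"] D[of "cl x" "cl y"]
        cl[of x] cl[of y] that D_nonneg by simp
    then have "D a (cl y) = D a (cl x) + D (cl x) (cl y)"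
      using D_nonneg by (subst (asm) ennreal_inj) auto
    then show ?thesis by (simp add: s_def)
  qed
  show ?thesis
  proof
    show "1-lipschitz_on UNIV s"
    proof (rule lipschitz_on_leI)
      fix x y :: real assume xy: "x \<le> y"
      have "s y - s x \<le> cl y - cl x"
        using s_diff[OF xy] D(2)[of "cl x" "cl y"] cl(1,2)[of x] cl(1,2)[of y] cl(3)[OF xy] by simp
      also have "\<dots> \<le> y - x" using cl(4)[OF xy] .
      finally show "dist (s x) (s y) \<le> 1 * dist x y"
        using s_diff[OF xy] D_nonneg[of "cl x" "cl y"] xy by (simp add: dist_real_def)
    qed simp
    show "mono s" using s_diff D_nonneg by (auto intro!: monoI simp: algebra_simps)
    show "s a = 0"
      using D(2)[of a a] D_nonneg[of a a] cl(5)[of a] \<open>a \<le> b\<close> by (simp add: s_def)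
    fix x y assume "x \<in> {a..b}" "y \<in> {a..b}" "x \<le> y"
    then show "curve_length \<eta> x y = ennreal (s y - s x)"
      using s_diff D cl by auto
  qed
qed

lemma borel_measurable_lipschitz_compose:
  fixes \<gamma> :: "real \<Rightarrow> 'a::metric_space"
  assumes "L-lipschitz_on UNIV \<gamma>" "\<rho> \<in> borel_measurable borel"
  shows "(\<lambda>t. \<rho> (\<gamma> t)) \<in> borel_measurable borel"
  using borel_measurable_continuous_onI[OF lipschitz_on_continuous_on[OF assms(1)]] assms(2)
  by (rule measurable_compose)

lemma dist_le_length_function_diff:
  fixes \<eta> :: "real \<Rightarrow> 'a::metric_space"
  assumes len: "\<And>x y. x \<in> {a..b} \<Longrightarrow> y \<in> {a..b} \<Longrightarrow> x \<le> y \<Longrightarrow> curve_length \<eta> x y = ennreal (s y - s x)"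
    and "mono s" "x \<in> {a..b}" "y \<in> {a..b}"
  shows "dist (\<eta> x) (\<eta> y) \<le> \<bar>s x - s y\<bar>"
proof -
  have *: "dist (\<eta> x) (\<eta> y) \<le> s y - s x" if "x \<in> {a..b}" "y \<in> {a..b}" "x \<le> y" for x y
    using dist_le_curve_length[OF that(3), of \<eta>] len[OF that] monoD[OF \<open>mono s\<close> that(3)]
    by (auto simp: ennreal_le_iff2)
  show ?thesis
    using *[OF assms(3,4)] *[OF assms(4,3)] by (cases "x \<le> y") (auto simp: dist_commute)
qed

lemma lipschitz_curve_arclength_factorization:
  fixes \<eta> :: "real \<Rightarrow> 'a::metric_space"
  assumes \<eta>: "1-lipschitz_on {0..L} \<eta>" and "0 \<le> L"
  obtains \<beta> s where "arclength_curve \<beta> (s L)" "1-lipschitz_on UNIV \<beta>"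
    "1-lipschitz_on UNIV s" "mono s" "s 0 = 0" "\<And>t. t \<in> {0..L} \<Longrightarrow> \<beta> (s t) = \<eta> t"
proof -
  obtain s where s: "1-lipschitz_on UNIV s" "mono s" "s 0 = 0"
    and len: "\<And>x y. x \<in> {0..L} \<Longrightarrow> y \<in> {0..L} \<Longrightarrow> x \<le> y \<Longrightarrow> curve_length \<eta> x y = ennreal (s y - s x)"
    using lipschitz_curve_length_function[OF \<eta> \<open>0 \<le> L\<close>] by blast
  define S where "S = s L"
  have dist_le: "dist (\<eta> x) (\<eta> y) \<le> \<bar>s x - s y\<bar>" if "x \<in> {0..L}" "y \<in> {0..L}" for x y
    using dist_le_length_function_diff[OF len s(2) that] .
  have "\<exists>t\<in>{0..L}. s t = \<sigma>" if "\<sigma> \<in> {0..S}" for \<sigma>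
    using IVT'[of s 0 \<sigma> L] that s(3) \<open>0 \<le> L\<close>
      continuous_on_subset[OF lipschitz_on_continuous_on[OF s(1)], of "{0..L}"]
    by (auto simp: S_def)
  then obtain p where p: "\<And>\<sigma>. \<sigma> \<in> {0..S} \<Longrightarrow> p \<sigma> \<in> {0..L} \<and> s (p \<sigma>) = \<sigma>"
    by metis
  have S: "0 \<le> S" using monoD[OF s(2) \<open>0 \<le> L\<close>] s(3) by (simp add: S_def)
  define \<beta> where "\<beta> \<sigma> = \<eta> (p (max 0 (min S \<sigma>)))" for \<sigma>
  have \<beta>_s: "\<beta> (s t) = \<eta> t" if "t \<in> {0..L}" for t
  proof -
    have "s t \<in> {0..S}"
      using that monoD[OF s(2), of 0 t] monoD[OF s(2), of t L] s(3) by (auto simp: S_def)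
    then show ?thesis
      using dist_le[of "p (s t)" t] p[of "s t"] that by (simp add: \<beta>_def)
  qed
  have "1-lipschitz_on {0..S} (\<lambda>\<sigma>. \<eta> (p \<sigma>))"
  proof (rule lipschitz_onI)
    fix x y assume "x \<in> {0..S}" "y \<in> {0..S}"
    then show "dist (\<eta> (p x)) (\<eta> (p y)) \<le> 1 * dist x y"
      using dist_le[of "p x" "p y"] p[of x] p[of y] by (simp add: dist_real_def)
  qed simp
  then have \<beta>_lip: "1-lipschitz_on UNIV \<beta>"
    unfolding \<beta>_def by (rule lipschitz_on_clamp)
  have "arclength_curve \<beta> (s L)"
    unfolding S_def[symmetric]
  proof (rule arclength_curveI[OF lipschitz_on_subset[OF \<beta>_lip subset_UNIV] S])
    fix \<sigma>\<^sub>1 \<sigma>\<^sub>2 assume \<sigma>: "0 \<le> \<sigma>\<^sub>1" "\<sigma>\<^sub>1 \<le> \<sigma>\<^sub>2" "\<sigma>\<^sub>2 \<le> S"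
    (* parameters of eta at arc length sigma1 and sigma2, taken in increasing order *)
    define t\<^sub>1 where "t\<^sub>1 = p \<sigma>\<^sub>1"
    define t\<^sub>2 where "t\<^sub>2 = max (p \<sigma>\<^sub>1) (p \<sigma>\<^sub>2)"
    have t: "t\<^sub>1 \<in> {0..L}" "t\<^sub>2 \<in> {0..L}" "t\<^sub>1 \<le> t\<^sub>2" "s t\<^sub>1 = \<sigma>\<^sub>1" "s t\<^sub>2 = \<sigma>\<^sub>2"
      using p[of \<sigma>\<^sub>1] p[of \<sigma>\<^sub>2] \<sigma> monoD[OF s(2), of "p \<sigma>\<^sub>2" "p \<sigma>\<^sub>1"]
      by (auto simp: t\<^sub>1_def t\<^sub>2_def max_def)
    have "ennreal (\<sigma>\<^sub>2 - \<sigma>\<^sub>1) = curve_length \<eta> t\<^sub>1 t\<^sub>2"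
      using len[of t\<^sub>1 t\<^sub>2] t by simp
    also have "\<dots> \<le> curve_length \<beta> \<sigma>\<^sub>1 \<sigma>\<^sub>2"
      using t \<beta>_s by (intro curve_length_le_reparametrization[where \<phi> = s])
        (auto intro: mono_onI monoD[OF s(2)])
    finally show "ennreal (\<sigma>\<^sub>2 - \<sigma>\<^sub>1) \<le> curve_length \<beta> \<sigma>\<^sub>1 \<sigma>\<^sub>2" .
  qed
  with \<beta>_lip s \<beta>_s show ?thesis using that by blast
qed

lemma lipschitz_curve_arclength_reparametrization:
  fixes \<eta> :: "real \<Rightarrow> 'a::metric_space"
  assumes \<eta>: "1-lipschitz_on {0..L} \<eta>" and "0 \<le> L" and \<rho>: "\<rho> \<in> borel_measurable borel"
  obtains \<beta> S where "arclength_curve \<beta> S" "\<beta> 0 = \<eta> 0" "\<beta> S = \<eta> L"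
    "line_integral \<rho> \<beta> S \<le> (\<integral>\<^sup>+t\<in>{0..L}. \<rho> (\<eta> t) \<partial>lborel)"
proof -
  obtain \<beta> s where \<beta>: "arclength_curve \<beta> (s L)" "1-lipschitz_on UNIV \<beta>"
    and s: "1-lipschitz_on UNIV s" "mono s" "s 0 = 0" and \<beta>_s: "\<And>t. t \<in> {0..L} \<Longrightarrow> \<beta> (s t) = \<eta> t"
    using lipschitz_curve_arclength_factorization[OF \<eta> \<open>0 \<le> L\<close>] by blast
  have "\<beta> 0 = \<eta> 0" "\<beta> (s L) = \<eta> L"
    using \<beta>_s[of 0] \<beta>_s[of L] s(3) \<open>0 \<le> L\<close> by simp_all
  moreover have "line_integral \<rho> \<beta> (s L) \<le> (\<integral>\<^sup>+t\<in>{0..L}. \<rho> (\<beta> (s t)) \<partial>lborel)"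
    using nn_integral_le_compose_mono_lipschitz[OF s(1,2) \<open>0 \<le> L\<close>
        borel_measurable_lipschitz_compose[OF \<beta>(2) \<rho>]]
    by (simp add: line_integral_def s(3))
  moreover have "\<dots> = (\<integral>\<^sup>+t\<in>{0..L}. \<rho> (\<eta> t) \<partial>lborel)"
    by (intro nn_integral_cong) (simp add: \<beta>_s split: split_indicator)
  ultimately show ?thesis using that \<beta>(1) by simp
qed

section \<open>The weighted distance to a set\<close>

lemma set_borel_measurable_lipschitz_compose:
  fixes \<gamma> :: "real \<Rightarrow> 'a::metric_space" and \<rho> :: "'a \<Rightarrow> ennreal"
  assumes "L-lipschitz_on {a..b} \<gamma>" "\<rho> \<in> borel_measurable borel"
  shows "(\<lambda>t. \<rho> (\<gamma> t) * indicator {a..b} t) \<in> borel_measurable borel"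
proof -
  have "(\<lambda>t. \<rho> (\<gamma> (max a (min b t))) * indicator {a..b} t) \<in> borel_measurable borel"
    using borel_measurable_lipschitz_compose[OF lipschitz_on_clamp[OF assms(1)] assms(2)]
    by (intro borel_measurable_times_ennreal borel_measurable_indicator) auto
  also have "(\<lambda>t. \<rho> (\<gamma> (max a (min b t))) * indicator {a..b} t) = (\<lambda>t. \<rho> (\<gamma> t) * indicator {a..b} t)"
    by (auto split: split_indicator)
  finally show ?thesis .
qed

lemma set_nn_integral_shift:
  fixes f :: "real \<Rightarrow> ennreal"
  assumes "(\<lambda>t. f t * indicator {a..b} t) \<in> borel_measurable borel"
  shows "(\<integral>\<^sup>+t\<in>{a+c..b+c}. f (t - c) \<partial>lborel) = (\<integral>\<^sup>+t\<in>{a..b}. f t \<partial>lborel)"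
proof -
  have "(\<integral>\<^sup>+t\<in>{a..b}. f t \<partial>lborel) = (\<integral>\<^sup>+x. f (- c + x) * indicator {a..b} (- c + x) \<partial>lborel)"
    using nn_integral_real_affine[OF assms, of 1 "- c"] by simp
  also have "\<dots> = (\<integral>\<^sup>+t\<in>{a+c..b+c}. f (t - c) \<partial>lborel)"
    by (intro nn_integral_cong) (auto split: split_indicator)
  finally show ?thesis ..
qed

definition weighted_infdist :: "('a::metric_space \<Rightarrow> ennreal) \<Rightarrow> 'a \<Rightarrow> 'a set \<Rightarrow> ennreal" where
  "weighted_infdist \<rho> x F =
     (INF (\<gamma>, l) \<in> {(\<gamma>, l). arclength_curve \<gamma> l \<and> \<gamma> 0 = x \<and> \<gamma> l \<in> F}. line_integral \<rho> \<gamma> l)"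

lemma weighted_infdist_le_line_integral:
  "arclength_curve \<gamma> l \<Longrightarrow> \<gamma> l \<in> F \<Longrightarrow> weighted_infdist \<rho> (\<gamma> 0) F \<le> line_integral \<rho> \<gamma> l"
  unfolding weighted_infdist_def by (rule INF_lower2[of "(\<gamma>, l)"]) auto

lemma weighted_infdist_less_iff:
  "weighted_infdist \<rho> x F < b \<longleftrightarrow>
     (\<exists>\<gamma> l. arclength_curve \<gamma> l \<and> \<gamma> 0 = x \<and> \<gamma> l \<in> F \<and> line_integral \<rho> \<gamma> l < b)"
  unfolding weighted_infdist_def by (subst INF_less_iff) auto

lemma weighted_infdist_eq_0: "x \<in> F \<Longrightarrow> weighted_infdist \<rho> x F = 0"
  using weighted_infdist_le_line_integral[of "\<lambda>_. x" 0 F \<rho>] arclength_curve_const[of x]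
  by (simp add: line_integral_def)

lemma weighted_infdist_le_lipschitz:
  fixes \<eta> :: "real \<Rightarrow> 'a::metric_space"
  assumes "1-lipschitz_on {0..L} \<eta>" "0 \<le> L" "\<eta> L \<in> F" "\<rho> \<in> borel_measurable borel"
  shows "weighted_infdist \<rho> (\<eta> 0) F \<le> (\<integral>\<^sup>+t\<in>{0..L}. \<rho> (\<eta> t) \<partial>lborel)"
proof -
  obtain \<beta> S where "arclength_curve \<beta> S" "\<beta> 0 = \<eta> 0" "\<beta> S = \<eta> L"
    "line_integral \<rho> \<beta> S \<le> (\<integral>\<^sup>+t\<in>{0..L}. \<rho> (\<eta> t) \<partial>lborel)"
    using lipschitz_curve_arclength_reparametrization[OF assms(1,2,4)] by blast
  then show ?thesis
    using weighted_infdist_le_line_integral[of \<beta> S F \<rho>] assms(3) by simp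
qed

lemma continuous_on_first_hit:
  fixes \<gamma> :: "real \<Rightarrow> 'a::topological_space"
  assumes "continuous_on {a..b} \<gamma>" "closed F" "\<exists>t\<in>{a..b}. \<gamma> t \<in> F"
  obtains t where "t \<in> {a..b}" "\<gamma> t \<in> F" "\<And>s. a \<le> s \<Longrightarrow> s < t \<Longrightarrow> \<gamma> s \<notin> F"
proof -
  define H where "H = {t \<in> {a..b}. \<gamma> t \<in> F}"
  have "closed H"
    unfolding H_def using continuous_closed_preimage[OF assms(1) _ assms(2)]
    by (simp add: vimage_def Int_def conj_commute)
  moreover have "H \<noteq> {}" "bdd_below H" using assms(3) by (auto simp: H_def bdd_below_def)
  ultimately have "Inf H \<in> H" by (intro closed_contains_Inf)
  moreover have "\<gamma> s \<notin> F" if "a \<le> s" "s < Inf H" for s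
    using cInf_lower[of s H] \<open>bdd_below H\<close> \<open>Inf H \<in> H\<close> that by (force simp: H_def)
  ultimately show ?thesis using that by (auto simp: H_def)
qed

lemma weighted_infdist_le_concat:
  fixes \<gamma> :: "real \<Rightarrow> 'a::metric_space"
  assumes \<gamma>: "1-lipschitz_on {0..l} \<gamma>" and "0 \<le> l" and \<rho>: "\<rho> \<in> borel_measurable borel"
  shows "weighted_infdist \<rho> (\<gamma> 0) F \<le> (\<integral>\<^sup>+t\<in>{0..l}. \<rho> (\<gamma> t) \<partial>lborel) + weighted_infdist \<rho> (\<gamma> l) F"
    (is "_ \<le> ?J + _")
proof (rule ennreal_le_epsilon)
  fix e :: real assume "?J + weighted_infdist \<rho> (\<gamma> l) F < top" "0 < e"
  then have "weighted_infdist \<rho> (\<gamma> l) F < weighted_infdist \<rho> (\<gamma> l) F + ennreal e"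
    by (cases "weighted_infdist \<rho> (\<gamma> l) F") (auto simp: top_add ennreal_less_iff simp flip: ennreal_plus)
  then obtain \<beta> m where \<beta>: "arclength_curve \<beta> m" "\<beta> 0 = \<gamma> l" "\<beta> m \<in> F"
    and \<beta>_int: "line_integral \<rho> \<beta> m < weighted_infdist \<rho> (\<gamma> l) F + ennreal e"
    unfolding weighted_infdist_less_iff by blast
  have "0 \<le> m" using \<beta>(1) by (simp add: arclength_curve_def)
  have \<beta>_shift: "1-lipschitz_on {l..l+m} (\<lambda>t. \<beta> (t - l))"
  proof (rule lipschitz_onI)
    fix x y assume "x \<in> {l..l+m}" "y \<in> {l..l+m}"
    then show "dist (\<beta> (x - l)) (\<beta> (y - l)) \<le> 1 * dist x y"
      using lipschitz_onD[OF arclength_curve_lipschitz[OF \<beta>(1)], of "x - l" "y - l"]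
      by (simp add: dist_real_def)
  qed simp
  define \<delta> where "\<delta> t = (if t \<le> l then \<gamma> t else \<beta> (t - l))" for t
  have "1-lipschitz_on {0..l+m} \<delta>"
    unfolding \<delta>_def using \<beta>(2) by (intro lipschitz_on_concat[OF \<gamma> \<beta>_shift]) simp
  moreover have "\<delta> (l + m) \<in> F" "\<delta> 0 = \<gamma> 0"
    using \<beta>(2,3) \<open>0 \<le> l\<close> \<open>0 \<le> m\<close> by (auto simp: \<delta>_def)
  ultimately have "weighted_infdist \<rho> (\<gamma> 0) F \<le> (\<integral>\<^sup>+t\<in>{0..l+m}. \<rho> (\<delta> t) \<partial>lborel)"
    using weighted_infdist_le_lipschitz[of "l + m" \<delta> F \<rho>] \<rho> \<open>0 \<le> l\<close> \<open>0 \<le> m\<close> by simp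
  also have "\<dots> \<le> (\<integral>\<^sup>+t. \<rho> (\<gamma> t) * indicator {0..l} t + \<rho> (\<beta> (t - l)) * indicator {l..l+m} t \<partial>lborel)"
    by (intro nn_integral_mono) (auto simp: \<delta>_def split: split_indicator)
  also have "\<dots> = ?J + (\<integral>\<^sup>+t\<in>{l..l+m}. \<rho> (\<beta> (t - l)) \<partial>lborel)"
    using set_borel_measurable_lipschitz_compose[OF \<gamma> \<rho>]
      set_borel_measurable_lipschitz_compose[OF \<beta>_shift \<rho>]
    by (intro nn_integral_add) auto
  also have "(\<integral>\<^sup>+t\<in>{l..l+m}. \<rho> (\<beta> (t - l)) \<partial>lborel) = line_integral \<rho> \<beta> m"
    using set_nn_integral_shift[of "\<lambda>t. \<rho> (\<beta> t)" 0 m l]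
      set_borel_measurable_lipschitz_compose[OF arclength_curve_lipschitz[OF \<beta>(1)] \<rho>]
    by (simp add: line_integral_def add.commute)
  also have "?J + line_integral \<rho> \<beta> m \<le> ?J + weighted_infdist \<rho> (\<gamma> l) F + ennreal e"
    using \<beta>_int by (simp add: add.assoc add_left_mono)
  finally show "weighted_infdist \<rho> (\<gamma> 0) F \<le> ?J + weighted_infdist \<rho> (\<gamma> l) F + ennreal e" .
qed

lemma set_nn_integral_reflect:
  fixes f :: "real \<Rightarrow> ennreal"
  assumes "(\<lambda>t. f t * indicator {a..b} t) \<in> borel_measurable borel"
  shows "(\<integral>\<^sup>+t\<in>{a..b}. f (a + b - t) \<partial>lborel) = (\<integral>\<^sup>+t\<in>{a..b}. f t \<partial>lborel)"
proof -
  have "(\<integral>\<^sup>+t\<in>{a..b}. f t \<partial>lborel) = (\<integral>\<^sup>+x. f (a + b - x) * indicator {a..b} (a + b - x) \<partial>lborel)"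
    using nn_integral_real_affine[OF assms, of "-1" "a + b"] by simp
  also have "\<dots> = (\<integral>\<^sup>+t\<in>{a..b}. f (a + b - t) \<partial>lborel)"
    by (intro nn_integral_cong) (auto split: split_indicator)
  finally show ?thesis ..
qed

lemma abs_enn2ereal_diff_le:
  fixes a b J :: ennreal
  assumes "a \<noteq> top" "b \<noteq> top" "a \<le> b + J" "b \<le> a + J"
  shows "\<bar>enn2ereal a - enn2ereal b\<bar> \<le> enn2ereal J"
proof (cases "J = top")
  case False
  with assms(1,2) obtain x y j where "a = ennreal x" "b = ennreal y" "J = ennreal j" "0 \<le> x" "0 \<le> y" "0 \<le> j"
    by (metis ennreal_cases)
  with assms(3,4) show ?thesis
    by (simp add: abs_le_iff flip: ennreal_plus)
qed simp

lemma upper_gradientI_lipschitz_curves: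
  fixes u g :: "'a::metric_space \<Rightarrow> ennreal"
  assumes g: "g \<in> borel_measurable borel" and fin: "\<And>x. u x \<noteq> top"
    and bound: "\<And>\<gamma> (l::real). 1-lipschitz_on {0..l} \<gamma> \<Longrightarrow> 0 \<le> l \<Longrightarrow>
      u (\<gamma> 0) \<le> u (\<gamma> l) + (\<integral>\<^sup>+t\<in>{0..l}. g (\<gamma> t) \<partial>lborel)"
  shows "upper_gradient g (\<lambda>x. enn2ereal (u x))"
  unfolding upper_gradient_def
proof (intro conjI allI impI g, elim conjE)
  fix \<gamma> :: "real \<Rightarrow> 'a" and l :: real
  assume "arclength_curve \<gamma> l" "0 < l"
  then have \<gamma>: "1-lipschitz_on {0..l} \<gamma>" and "0 \<le> l"
    by (auto intro: arclength_curve_lipschitz)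
  have "1-lipschitz_on {0..l} (\<lambda>t. \<gamma> (l - t))"
  proof (rule lipschitz_onI)
    fix x y assume "x \<in> {0..l}" "y \<in> {0..l}"
    then show "dist (\<gamma> (l - x)) (\<gamma> (l - y)) \<le> 1 * dist x y"
      using lipschitz_onD[OF \<gamma>, of "l - x" "l - y"] by (simp add: dist_real_def)
  qed simp
  moreover have "(\<integral>\<^sup>+t\<in>{0..l}. g (\<gamma> (l - t)) \<partial>lborel) = line_integral g \<gamma> l"
    using set_nn_integral_reflect[of "\<lambda>t. g (\<gamma> t)" 0 l]
      set_borel_measurable_lipschitz_compose[OF \<gamma> g]
    by (simp add: line_integral_def)
  ultimately have "u (\<gamma> l) \<le> u (\<gamma> 0) + line_integral g \<gamma> l"
    using bound[of l "\<lambda>t. \<gamma> (l - t)"] \<open>0 \<le> l\<close> by simp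
  moreover have "u (\<gamma> 0) \<le> u (\<gamma> l) + line_integral g \<gamma> l"
    using bound[OF \<gamma> \<open>0 \<le> l\<close>] by (simp add: line_integral_def)
  moreover have "\<bar>enn2ereal (u x)\<bar> \<noteq> \<infinity>" for x
    using fin[of x] by (cases "u x" rule: ennreal_cases) auto
  ultimately show "if \<bar>enn2ereal (u (\<gamma> 0))\<bar> \<noteq> \<infinity> \<and> \<bar>enn2ereal (u (\<gamma> l))\<bar> \<noteq> \<infinity>
      then \<bar>enn2ereal (u (\<gamma> 0)) - enn2ereal (u (\<gamma> l))\<bar> \<le> enn2ereal (line_integral g \<gamma> l)
      else line_integral g \<gamma> l = \<infinity>"
    using abs_enn2ereal_diff_le[OF fin fin] by simp
qed

lemma min_weighted_infdist_le_curve: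
  fixes \<gamma> :: "real \<Rightarrow> 'a::metric_space" and \<rho> :: "'a \<Rightarrow> ennreal"
  assumes \<gamma>: "1-lipschitz_on {0..l} \<gamma>" and "0 \<le> l" "closed F" and \<rho>: "\<rho> \<in> borel_measurable borel"
  shows "min 1 (weighted_infdist \<rho> (\<gamma> 0) F)
    \<le> min 1 (weighted_infdist \<rho> (\<gamma> l) F) + (\<integral>\<^sup>+t\<in>{0..l}. (if \<gamma> t \<in> F then 0 else \<rho> (\<gamma> t)) \<partial>lborel)"
    (is "_ \<le> _ + ?I")
proof (cases "\<exists>t\<in>{0..l}. \<gamma> t \<in> F")
  case True
  obtain a where a: "a \<in> {0..l}" "\<gamma> a \<in> F" "\<And>s. 0 \<le> s \<Longrightarrow> s < a \<Longrightarrow> \<gamma> s \<notin> F"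
    using continuous_on_first_hit[OF lipschitz_on_continuous_on[OF \<gamma>] \<open>closed F\<close> True] by blast
  have "weighted_infdist \<rho> (\<gamma> 0) F \<le> (\<integral>\<^sup>+t\<in>{0..a}. \<rho> (\<gamma> t) \<partial>lborel)"
    using a by (intro weighted_infdist_le_lipschitz lipschitz_on_subset[OF \<gamma>] \<rho>) auto
  also have "\<dots> = (\<integral>\<^sup>+t\<in>{0..<a}. \<rho> (\<gamma> t) \<partial>lborel)"
    using AE_lborel_singleton[of a]
    by (intro nn_integral_cong_AE) (auto elim!: eventually_mono split: split_indicator)
  also have "\<dots> \<le> ?I"
    using a by (intro nn_integral_mono) (auto split: split_indicator)
  finally show ?thesis
    by (simp add: min.coboundedI2 add_increasing)
next
  case False
  then have "?I = (\<integral>\<^sup>+t\<in>{0..l}. \<rho> (\<gamma> t) \<partial>lborel)"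
    by (intro nn_integral_cong) (auto split: split_indicator)
  then have "weighted_infdist \<rho> (\<gamma> 0) F \<le> ?I + weighted_infdist \<rho> (\<gamma> l) F"
    using weighted_infdist_le_concat[OF \<gamma> \<open>0 \<le> l\<close> \<rho>] by simp
  then show ?thesis
    by (cases "weighted_infdist \<rho> (\<gamma> l) F \<le> 1")
      (auto simp: min_def add.commute intro: order_trans add_increasing2)
qed

section \<open>Lower semicontinuity\<close>

lemma lower_semicont_borel_measurable:
  fixes \<rho> :: "'a::topological_space \<Rightarrow> ennreal"
  assumes "lower_semicont \<rho>"
  shows "\<rho> \<in> borel_measurable borel"
  by (rule borel_measurableI_greater) (use assms in \<open>auto simp: lower_semicont_def\<close>)

lemma lower_semicont_le_liminf:
  fixes \<rho> :: "'a::topological_space \<Rightarrow> ennreal"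
  assumes "lower_semicont \<rho>" "X \<longlonglongrightarrow> x"
  shows "\<rho> x \<le> liminf (\<lambda>n. \<rho> (X n))"
  unfolding le_Liminf_iff
proof (intro allI impI)
  fix z assume "z < \<rho> x"
  moreover have "open {y. z < \<rho> y}" using assms(1) by (simp add: lower_semicont_def)
  ultimately show "\<forall>\<^sub>F n in sequentially. z < \<rho> (X n)"
    using topological_tendstoD[OF assms(2)] by fastforce
qed

lemma diagonal_convergent_subsequence:
  fixes f :: "nat \<Rightarrow> 'b \<Rightarrow> 'a::metric_space" and q :: "nat \<Rightarrow> 'b"
  assumes "compact K" "\<And>n i. f n (q i) \<in> K"
  obtains r where "strict_mono r" "\<And>i. convergent (\<lambda>n. f (r n) (q i))"
proof (rule subsequence_diagonalization_lemma[of "\<lambda>i r. convergent (\<lambda>n. f (r n) (q i))" id])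
  fix i and r :: "nat \<Rightarrow> nat"
  obtain l k where "strict_mono k" "((\<lambda>n. f (r n) (q i)) \<circ> k) \<longlonglongrightarrow> l"
    using seq_compactE[OF compact_imp_seq_compact[OF assms(1)], of "\<lambda>n. f (r n) (q i)"] assms(2)
    by blast
  then have "convergent (\<lambda>n. f ((r \<circ> k) n) (q i))"
    by (auto simp: convergent_def o_def)
  with \<open>strict_mono k\<close> show "\<exists>k. strict_mono k \<and> convergent (\<lambda>n. f ((r \<circ> k) n) (q i))"
    by blast
next
  fix i N and r k k' :: "nat \<Rightarrow> nat"
  assume "convergent (\<lambda>n. f ((r \<circ> k) n) (q i))" and k': "\<And>j. N \<le> j \<Longrightarrow> \<exists>j'\<ge>j. k' j = k j'"
  then obtain l where l: "(\<lambda>n. f (r (k n)) (q i)) \<longlonglongrightarrow> l" by (auto simp: convergent_def)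
  have "(\<lambda>n. f (r (k' n)) (q i)) \<longlonglongrightarrow> l"
    unfolding lim_sequentially
  proof (intro allI impI)
    fix e :: real assume "0 < e"
    then obtain M where M: "\<And>n. M \<le> n \<Longrightarrow> dist (f (r (k n)) (q i)) l < e"
      using l by (auto simp: lim_sequentially)
    have "dist (f (r (k' n)) (q i)) l < e" if n: "max N M \<le> n" for n
    proof -
      obtain j where "n \<le> j" "k' n = k j" using k'[of n] n by auto
      then show ?thesis using M[of j] n by simp
    qed
    then show "\<exists>N'. \<forall>n\<ge>N'. dist (f (r (k' n)) (q i)) l < e" by blast
  qed
  then show "convergent (\<lambda>n. f ((r \<circ> k') n) (q i))" by (auto simp: convergent_def)
next
  fix k :: "nat \<Rightarrow> nat"
  assume "strict_mono k" "\<And>i. convergent (\<lambda>n. f ((id \<circ> k) n) (q i))"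
  then show thesis using that by simp
qed

lemma lipschitz_sequence_Cauchy:
  fixes f :: "nat \<Rightarrow> real \<Rightarrow> 'a::metric_space"
  assumes lip: "\<And>n. L-lipschitz_on UNIV (f n)" and conv: "\<And>x. x \<in> \<rat> \<Longrightarrow> convergent (\<lambda>n. f n x)"
  shows "Cauchy (\<lambda>n. f n t)"
proof (rule metric_CauchyI)
  fix e :: real assume "0 < e"
  have L: "0 \<le> L" using lipschitz_on_nonneg[OF lip] .
  then obtain x where x: "x \<in> \<rat>" "t < x" "x < t + e / (3 * (L + 1))"
    using Rats_dense_in_real[of t "t + e / (3 * (L + 1))"] \<open>0 < e\<close> by auto
  then have "Cauchy (\<lambda>n. f n x)" using conv by (simp add: convergent_Cauchy)
  then obtain N where N: "\<And>m n. N \<le> m \<Longrightarrow> N \<le> n \<Longrightarrow> dist (f m x) (f n x) < e / 3"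
    using metric_CauchyD[of "\<lambda>n. f n x" "e / 3"] \<open>0 < e\<close> by auto
  have near: "dist (f n t) (f n x) < e / 3" for n
  proof -
    have "dist (f n t) (f n x) \<le> L * (x - t)"
      using lipschitz_onD[OF lip[of n], of t x] x by (simp add: dist_real_def)
    also have "\<dots> \<le> (L + 1) * (x - t)" using x by simp
    also have "\<dots> < e / 3" using x L by (simp add: field_simps)
    finally show ?thesis .
  qed
  have "dist (f m t) (f n t) < e" if "N \<le> m" "N \<le> n" for m n
    using dist_triangle[of "f m t" "f n t" "f m x"] dist_triangle[of "f m x" "f n t" "f n x"]
      near[of m] near[of n] N[OF that] by (simp add: dist_commute)
  then show "\<exists>N. \<forall>m\<ge>N. \<forall>n\<ge>N. dist (f m t) (f n t) < e" by blast
qed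

lemma lipschitz_sequence_convergent_subsequence:
  fixes f :: "nat \<Rightarrow> real \<Rightarrow> 'a::metric_space"
  assumes K: "compact K" "\<And>n t. f n t \<in> K" and lip: "\<And>n. L-lipschitz_on UNIV (f n)"
  obtains r g where "strict_mono r" "\<And>t. (\<lambda>n. f (r n) t) \<longlonglongrightarrow> g t" "L-lipschitz_on UNIV g"
proof -
  define q :: "nat \<Rightarrow> real" where "q = from_nat_into \<rat>"
  have q: "range q = \<rat>"
    unfolding q_def by (rule range_from_nat_into) (auto simp: countable_rat)
  obtain r where r: "strict_mono r" "\<And>i. convergent (\<lambda>n. f (r n) (q i))"
    using diagonal_convergent_subsequence[OF K(1), of f q] K(2) by blast
  have "convergent (\<lambda>n. f (r n) x)" if "x \<in> \<rat>" for x
    using r(2) that q by (metis rangeE)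
  then have "Cauchy (\<lambda>n. f (r n) t)" for t
    using lipschitz_sequence_Cauchy[of L "\<lambda>n. f (r n)"] lip by blast
  then have "\<exists>g. (\<lambda>n. f (r n) t) \<longlonglongrightarrow> g" for t
    using complete_def[THEN iffD1, OF compact_imp_complete[OF K(1)], rule_format,
        of "\<lambda>n. f (r n) t"] K(2) by auto
  then obtain g where g: "\<And>t. (\<lambda>n. f (r n) t) \<longlonglongrightarrow> g t" by metis
  have "L-lipschitz_on UNIV g"
  proof (rule lipschitz_onI)
    fix s t :: real
    show "dist (g s) (g t) \<le> L * dist s t"
      using lipschitz_onD[OF lip] by (intro tendsto_upperbound[OF tendsto_dist[OF g g]]) auto
  qed (rule lipschitz_on_nonneg[OF lip])
  with r(1) g show ?thesis using that by blast
qed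

lemma lipschitz_sequence_tendsto_moving_point:
  fixes f :: "nat \<Rightarrow> real \<Rightarrow> 'a::metric_space"
  assumes lip: "\<And>n. L-lipschitz_on UNIV (f n)" and g: "\<And>t. (\<lambda>n. f n t) \<longlonglongrightarrow> g t" and "a \<longlonglongrightarrow> A"
  shows "(\<lambda>n. f n (a n)) \<longlonglongrightarrow> g A"
proof (rule tendsto_dist_iff[THEN iffD2], rule Lim_null_comparison)
  have "dist (f n (a n)) (g A) \<le> L * dist (a n) A + dist (f n A) (g A)" for n
    using dist_triangle[of "f n (a n)" "g A" "f n A"] lipschitz_onD[OF lip[of n], of "a n" A] by simp
  then show "\<forall>\<^sub>F n in sequentially. norm (dist (f n (a n)) (g A)) \<le> L * dist (a n) A + dist (f n A) (g A)"
    by (simp add: always_eventually)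
  have "(\<lambda>n. dist (a n) A) \<longlonglongrightarrow> 0" "(\<lambda>n. dist (f n A) (g A)) \<longlonglongrightarrow> 0"
    using assms(3) g[of A] by (simp_all add: tendsto_dist_iff[symmetric])
  then show "(\<lambda>n. L * dist (a n) A + dist (f n A) (g A)) \<longlonglongrightarrow> 0"
    by (rule tendsto_add_zero[OF tendsto_mult_right_zero])
qed

lemma lipschitz_curves_convergent_subsequence:
  fixes \<eta> :: "nat \<Rightarrow> real \<Rightarrow> 'a::metric_space"
  assumes "compact K" "\<And>n t. \<eta> n t \<in> K" and lip: "\<And>n. L-lipschitz_on UNIV (\<eta> n)"
    and "\<And>n. a n \<in> {0..M}"
  obtains \<sigma> \<zeta> A where "strict_mono \<sigma>" "\<And>t. (\<lambda>n. \<eta> (\<sigma> n) t) \<longlonglongrightarrow> \<zeta> t" "L-lipschitz_on UNIV \<zeta>"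
    "(\<lambda>n. a (\<sigma> n)) \<longlonglongrightarrow> A" "A \<in> {0..M}" "(\<lambda>n. \<eta> (\<sigma> n) (a (\<sigma> n))) \<longlonglongrightarrow> \<zeta> A"
proof -
  obtain A r where A: "A \<in> {0..M}" "strict_mono r" "(a \<circ> r) \<longlonglongrightarrow> A"
    using seq_compactE[OF compact_imp_seq_compact[OF compact_Icc], of a] assms(4) by blast
  obtain r' \<zeta> where r': "strict_mono r'" "\<And>t. (\<lambda>n. \<eta> (r (r' n)) t) \<longlonglongrightarrow> \<zeta> t"
    and \<zeta>: "L-lipschitz_on UNIV \<zeta>"
    using lipschitz_sequence_convergent_subsequence[OF assms(1,2) lip] by blast
  have a_lim: "(\<lambda>n. a (r (r' n))) \<longlonglongrightarrow> A"
    using LIMSEQ_subseq_LIMSEQ[OF A(3) r'(1)] by (simp add: o_def)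
  have "(\<lambda>n. \<eta> (r (r' n)) (a (r (r' n)))) \<longlonglongrightarrow> \<zeta> A"
    using lipschitz_sequence_tendsto_moving_point[of L "\<lambda>n. \<eta> (r (r' n))", OF lip r'(2) a_lim] .
  with strict_mono_o[OF A(2) r'(1)] r'(2) \<zeta> a_lim A(1) show ?thesis
    by (intro that[of "r \<circ> r'" \<zeta> A]) simp_all
qed

lemma weighted_infdist_less_imp_short_curve:
  fixes \<rho> :: "'a::metric_space \<Rightarrow> ennreal"
  assumes "weighted_infdist \<rho> x F < ennreal b" "closed F" "0 < c" "\<forall>y. y \<notin> F \<longrightarrow> ennreal c \<le> \<rho> y"
  obtains \<eta> a where "1-lipschitz_on UNIV \<eta>" "\<eta> 0 = x" "\<eta> a \<in> F" "0 \<le> a" "c * a \<le> b"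
    "(\<integral>\<^sup>+t\<in>{0..a}. \<rho> (\<eta> t) \<partial>lborel) \<le> ennreal b" "\<And>t. dist (\<eta> t) x \<le> a"
proof -
  obtain \<gamma> l where \<gamma>: "arclength_curve \<gamma> l" "\<gamma> 0 = x" "\<gamma> l \<in> F"
    and "line_integral \<rho> \<gamma> l < ennreal b"
    using assms(1) unfolding weighted_infdist_less_iff by blast
  have \<gamma>_lip: "1-lipschitz_on {0..l} \<gamma>" and "0 \<le> l"
    using \<gamma>(1) by (auto intro: arclength_curve_lipschitz simp: arclength_curve_def)
  have "\<exists>t\<in>{0..l}. \<gamma> t \<in> F" using \<gamma>(3) \<open>0 \<le> l\<close> by auto
  then obtain a where a: "a \<in> {0..l}" "\<gamma> a \<in> F" "\<And>s. 0 \<le> s \<Longrightarrow> s < a \<Longrightarrow> \<gamma> s \<notin> F"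
    using continuous_on_first_hit[OF lipschitz_on_continuous_on[OF \<gamma>_lip] assms(2)] by blast
  have \<gamma>_lip_a: "1-lipschitz_on {0..a} \<gamma>" using a(1) by (auto intro: lipschitz_on_subset[OF \<gamma>_lip])
  define \<eta> where "\<eta> t = \<gamma> (max 0 (min a t))" for t
  have \<eta>_eq: "\<eta> t = \<gamma> t" if "t \<in> {0..a}" for t using that by (simp add: \<eta>_def)
  have int: "(\<integral>\<^sup>+t\<in>{0..a}. \<rho> (\<eta> t) \<partial>lborel) \<le> ennreal b"
  proof -
    have "(\<integral>\<^sup>+t\<in>{0..a}. \<rho> (\<eta> t) \<partial>lborel) \<le> line_integral \<rho> \<gamma> l"
      unfolding line_integral_def using a(1) \<eta>_eq
      by (intro nn_integral_mono) (auto split: split_indicator)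
    then show ?thesis using \<open>line_integral \<rho> \<gamma> l < ennreal b\<close> by simp
  qed
  have "ennreal (c * a) = (\<integral>\<^sup>+t\<in>{0..<a}. ennreal c \<partial>lborel)"
    using a(1) \<open>0 < c\<close> by (simp add: nn_integral_cmult_indicator ennreal_mult)
  also have "\<dots> \<le> (\<integral>\<^sup>+t\<in>{0..a}. \<rho> (\<eta> t) \<partial>lborel)"
    using a(3) \<eta>_eq assms(4) by (intro nn_integral_mono) (auto split: split_indicator)
  also note int
  finally have "c * a \<le> b"
    using assms(1) by (cases "0 \<le> b") (auto simp: ennreal_neg)
  moreover have "dist (\<eta> t) x \<le> a" for t
    using lipschitz_onD[OF \<gamma>_lip_a, of "max 0 (min a t)" 0] a(1) \<gamma>(2)
    by (auto simp: \<eta>_def dist_real_def)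
  moreover have "1-lipschitz_on UNIV \<eta>"
    unfolding \<eta>_def by (rule lipschitz_on_clamp[OF \<gamma>_lip_a])
  moreover have "\<eta> 0 = x" "\<eta> a = \<gamma> a" using \<eta>_eq[of 0] \<eta>_eq[of a] a(1) \<gamma>(2) by auto
  ultimately show ?thesis
    using that[of \<eta> a] a int by auto
qed

lemma set_nn_integral_lower_semicont_le_liminf:
  fixes f :: "nat \<Rightarrow> real \<Rightarrow> 'a::metric_space" and \<rho> :: "'a \<Rightarrow> ennreal"
  assumes \<rho>: "lower_semicont \<rho>" and lip: "\<And>n. L-lipschitz_on UNIV (f n)"
    and g: "\<And>t. (\<lambda>n. f n t) \<longlonglongrightarrow> g t" and a: "a \<longlonglongrightarrow> A"
  shows "(\<integral>\<^sup>+t\<in>{0..A}. \<rho> (g t) \<partial>lborel) \<le> liminf (\<lambda>n. \<integral>\<^sup>+t\<in>{0..a n}. \<rho> (f n t) \<partial>lborel)"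
proof -
  have pointwise: "\<rho> (g t) * indicator {0..<A} t \<le> liminf (\<lambda>n. \<rho> (f n t) * indicator {0..a n} t)" for t
  proof (cases "t \<in> {0..<A}")
    case True
    then have "\<forall>\<^sub>F n in sequentially. \<rho> (f n t) \<le> \<rho> (f n t) * indicator {0..a n} t"
      using order_tendstoD(1)[OF a, of t] by (auto elim!: eventually_mono)
    then have "\<rho> (g t) \<le> liminf (\<lambda>n. \<rho> (f n t) * indicator {0..a n} t)"
      by (rule order_trans[OF lower_semicont_le_liminf[OF \<rho> g] Liminf_mono])
    with True show ?thesis by simp
  qed simp
  have "(\<integral>\<^sup>+t\<in>{0..A}. \<rho> (g t) \<partial>lborel) = (\<integral>\<^sup>+t\<in>{0..<A}. \<rho> (g t) \<partial>lborel)"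
    using AE_lborel_singleton[of A]
    by (intro nn_integral_cong_AE) (auto elim!: eventually_mono split: split_indicator)
  also have "\<dots> \<le> (\<integral>\<^sup>+t. liminf (\<lambda>n. \<rho> (f n t) * indicator {0..a n} t) \<partial>lborel)"
    by (intro nn_integral_mono pointwise)
  also have "\<dots> \<le> liminf (\<lambda>n. \<integral>\<^sup>+t\<in>{0..a n}. \<rho> (f n t) \<partial>lborel)"
    using borel_measurable_lipschitz_compose[OF lip lower_semicont_borel_measurable[OF \<rho>]]
    by (intro nn_integral_liminf) auto
  finally show ?thesis .
qed

lemma weighted_infdist_le_of_tendsto:
  fixes \<rho> :: "'a::metric_space \<Rightarrow> ennreal"
  assumes "proper_space TYPE('a)" "closed F" and \<rho>: "lower_semicont \<rho>"
    and "0 < c" "\<forall>y. y \<notin> F \<longrightarrow> ennreal c \<le> \<rho> y"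
    and xs: "xs \<longlonglongrightarrow> x" and less: "\<And>n. weighted_infdist \<rho> (xs n) F < ennreal b"
  shows "weighted_infdist \<rho> x F \<le> ennreal b"
proof -
  define P where "P n \<eta> a \<longleftrightarrow> 1-lipschitz_on UNIV \<eta> \<and> \<eta> 0 = xs n \<and> \<eta> a \<in> F \<and> 0 \<le> a \<and> c * a \<le> b \<and>
      (\<integral>\<^sup>+t\<in>{0..a}. \<rho> (\<eta> t) \<partial>lborel) \<le> ennreal b \<and> (\<forall>t. dist (\<eta> t) (xs n) \<le> a)" for n \<eta> a
  have "\<exists>\<eta> a. P n \<eta> a" for n
    using weighted_infdist_less_imp_short_curve[OF less[of n] assms(2,4,5)] unfolding P_def by blast
  then obtain \<eta> a where curves: "\<And>n. P n (\<eta> n) (a n)"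
    by metis
  then have \<eta>: "\<And>n. 1-lipschitz_on UNIV (\<eta> n)" "\<And>n. \<eta> n 0 = xs n" "\<And>n. \<eta> n (a n) \<in> F"
    and int: "\<And>n. (\<integral>\<^sup>+t\<in>{0..a n}. \<rho> (\<eta> n t) \<partial>lborel) \<le> ennreal b"
    and near: "\<And>n t. dist (\<eta> n t) (xs n) \<le> a n"
    unfolding P_def by blast+
  have a: "a n \<in> {0..b / c}" for n
    using curves[of n] \<open>0 < c\<close> by (simp add: P_def pos_le_divide_eq mult.commute)
  obtain R where R: "\<And>n. dist x (xs n) \<le> R"
    using bounded_any_center[of "range xs" x] convergent_imp_bounded[OF xs] by auto
  (* all curves stay in one closed ball, which is compact because the space is proper *)
  have ball: "\<eta> n t \<in> cball x (R + b / c)" for n t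
    using dist_triangle[of x "\<eta> n t" "xs n"] R[of n] near[of n t] a[of n] by (simp add: dist_commute)
  have "compact (cball x (R + b / c))"
    using assms(1) by (simp add: proper_space_def)
  obtain \<sigma> \<zeta> A where \<sigma>: "strict_mono \<sigma>" "\<And>t. (\<lambda>n. \<eta> (\<sigma> n) t) \<longlonglongrightarrow> \<zeta> t"
    and \<zeta>: "1-lipschitz_on UNIV \<zeta>" and A: "(\<lambda>n. a (\<sigma> n)) \<longlonglongrightarrow> A" "A \<in> {0..b / c}"
    and endpoint: "(\<lambda>n. \<eta> (\<sigma> n) (a (\<sigma> n))) \<longlonglongrightarrow> \<zeta> A"
    by (rule lipschitz_curves_convergent_subsequence[of "cball x (R + b / c)" \<eta> 1 a "b / c",
          OF \<open>compact (cball x (R + b / c))\<close> ball \<eta>(1) a]) blast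
  have "(\<lambda>n. xs (\<sigma> n)) \<longlonglongrightarrow> \<zeta> 0" using \<sigma>(2)[of 0] by (simp add: \<eta>(2))
  moreover have "(\<lambda>n. xs (\<sigma> n)) \<longlonglongrightarrow> x"
    using LIMSEQ_subseq_LIMSEQ[OF xs \<sigma>(1)] by (simp add: o_def)
  ultimately have "\<zeta> 0 = x" by (rule LIMSEQ_unique)
  moreover have "\<zeta> A \<in> F"
    using \<open>closed F\<close> \<eta>(3) endpoint by (rule closed_sequentially)
  ultimately have "weighted_infdist \<rho> x F \<le> (\<integral>\<^sup>+t\<in>{0..A}. \<rho> (\<zeta> t) \<partial>lborel)"
    using weighted_infdist_le_lipschitz[OF lipschitz_on_subset[OF \<zeta> subset_UNIV], of A F \<rho>] A(2)
      lower_semicont_borel_measurable[OF \<rho>] by simp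
  also have "\<dots> \<le> liminf (\<lambda>n. \<integral>\<^sup>+t\<in>{0..a (\<sigma> n)}. \<rho> (\<eta> (\<sigma> n) t) \<partial>lborel)"
    using set_nn_integral_lower_semicont_le_liminf[OF \<rho> \<eta>(1) \<sigma>(2) A(1)] .
  also have "\<dots> \<le> ennreal b"
    by (rule Liminf_le) (simp_all add: int)
  finally show ?thesis .
qed

lemma lower_semicont_min_weighted_infdist:
  fixes \<rho> :: "'a::metric_space \<Rightarrow> ennreal"
  assumes "proper_space TYPE('a)" "closed F" "lower_semicont \<rho>"
    and "0 < c" "\<forall>y. y \<notin> F \<longrightarrow> ennreal c \<le> \<rho> y"
  shows "lower_semicont (\<lambda>x. min 1 (weighted_infdist \<rho> x F))"
  unfolding lower_semicont_def
proof
  fix s :: ennreal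
  have "closed {x. min 1 (weighted_infdist \<rho> x F) \<le> s}"
    unfolding closed_sequential_limits
  proof (intro allI impI, elim conjE)
    fix xs x assume le: "\<forall>n. xs n \<in> {x. min 1 (weighted_infdist \<rho> x F) \<le> s}" and "xs \<longlonglongrightarrow> x"
    have "min 1 (weighted_infdist \<rho> x F) \<le> s + ennreal e" if "s < top" "0 < e" for e
    proof (cases "1 \<le> s + ennreal e")
      case False
      obtain r where r: "s = ennreal r" "0 \<le> r" using \<open>s < top\<close> by (cases s) auto
      with False \<open>0 < e\<close> have "r + e < 1"
        by (simp add: ennreal_plus[symmetric] ennreal_1[symmetric] del: ennreal_plus ennreal_1)
      have "weighted_infdist \<rho> (xs n) F < ennreal (r + e)" for n
      proof -
        have "min 1 (weighted_infdist \<rho> (xs n) F) \<le> ennreal r" "ennreal r < 1"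
          using le r \<open>r + e < 1\<close> \<open>0 < e\<close> by (auto simp: ennreal_less_iff simp flip: ennreal_1)
        then have "weighted_infdist \<rho> (xs n) F \<le> ennreal r" by (auto simp: min_def split: if_splits)
        also have "\<dots> < ennreal (r + e)" using r(2) \<open>0 < e\<close> by (simp add: ennreal_less_iff)
        finally show ?thesis .
      qed
      then have "weighted_infdist \<rho> x F \<le> ennreal (r + e)"
        by (rule weighted_infdist_le_of_tendsto[OF assms \<open>xs \<longlonglongrightarrow> x\<close>])
      then show ?thesis using r \<open>0 < e\<close> by (simp add: min.coboundedI2)
    qed (simp add: min.coboundedI1)
    then show "x \<in> {x. min 1 (weighted_infdist \<rho> x F) \<le> s}"
      by (simp add: ennreal_le_epsilon)
  qed
  moreover have "{x. s < min 1 (weighted_infdist \<rho> x F)} = - {x. min 1 (weighted_infdist \<rho> x F) \<le> s}"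
    by (auto simp: not_le min_le_iff_disj)
  ultimately show "open {x. s < min 1 (weighted_infdist \<rho> x F)}"
    by (simp add: open_Compl)
qed

theorem lemma4p1:
  fixes F :: "'a::metric_space set" and \<rho> :: "'a \<Rightarrow> ennreal" and c :: real
    and u :: "'a \<Rightarrow> ennreal"
  assumes "proper_space TYPE('a)"
    and "closed F"
    and "lower_semicont \<rho>"
    and "c > 0"
    and "\<forall>x. x \<notin> F \<longrightarrow> ennreal c \<le> \<rho> x"
    and "\<forall>x. u x = min 1 (INF (\<gamma>, l) \<in> {(\<gamma>, l). arclength_curve \<gamma> l \<and> \<gamma> 0 = x \<and> \<gamma> l \<in> F}.
                                line_integral \<rho> \<gamma> l)"
  shows "lower_semicont u \<and> (\<forall>x\<in>F. u x = 0) \<and>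
         upper_gradient (\<lambda>x. if x \<in> F then 0 else \<rho> x) (\<lambda>x. enn2ereal (u x))"
proof -
  have u: "u = (\<lambda>x. min 1 (weighted_infdist \<rho> x F))"
    using assms(6) by (simp add: fun_eq_iff weighted_infdist_def)
  have \<rho>: "\<rho> \<in> borel_measurable borel"
    by (rule lower_semicont_borel_measurable[OF assms(3)])
  have "upper_gradient (\<lambda>x. if x \<in> F then 0 else \<rho> x) (\<lambda>x. enn2ereal (u x))"
  proof (rule upper_gradientI_lipschitz_curves)
    show "(\<lambda>x. if x \<in> F then 0 else \<rho> x) \<in> borel_measurable borel"
      using \<rho> assms(2) by (intro measurable_If_set) auto
    show "u x \<noteq> top" for x
      using le_less_trans[OF min.cobounded1 ennreal_one_less_top] by (simp add: u less_top)
    show "u (\<gamma> 0) \<le> u (\<gamma> l) + (\<integral>\<^sup>+t\<in>{0..l}. (if \<gamma> t \<in> F then 0 else \<rho> (\<gamma> t)) \<partial>lborel)"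
      if "1-lipschitz_on {0..l} \<gamma>" "0 \<le> l" for \<gamma> :: "real \<Rightarrow> 'a" and l :: real
      using min_weighted_infdist_le_curve[OF that assms(2) \<rho>] by (simp add: u)
  qed
  moreover have "lower_semicont u"
    unfolding u by (rule lower_semicont_min_weighted_infdist[OF assms(1-5)])
  ultimately show ?thesis
    by (simp add: u weighted_infdist_eq_0)
qed

end
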